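(* Let $a_{1}<a_{2}<a_{3}<\cdots$ be a strictly increasing infinite sequence of positive integers, let $A=\{a_{1},a_{2},a_{3},\ldots\}$, and let $n>0$ be an integer such that: (1) whenever $m>n$, there exist indices $i<r\leq s<j$ with $a_{m}=a_{i}+a_{j}=a_{r}+a_{s}$; and (2) whenever $a=a_{i}+a_{j}=a_{r}+a_{s}>a_{n}$ for some indices $i<r<s<j$, then $a=a_{m}$ for some $m>n$. Suppose $d_{1},d_{2},x,y$ are integers such that $x\neq d_{1}$, $d_{1}\neq d_{2}$, $d_{2}\neq y$, \[ \{d_{1},2d_{1},x,x+d_{1},x+2d_{1}\}\cup\{d_{2},2d_{2},y,y+d_{2},y+2d_{2}\}\subseteq A, \] $\{x,x+d_{1}\}\cap\{y,y+d_{2}\}\neq\varnothing$, and $d_{1}+d_{2}>a_{n}$. Then there is an integer $k\geq1$ such that every positive multiple of $k$ belongs to $A$. *)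

theory Defs
  imports Main
begin

end

theory Submission
  imports Defs
begin

text \<open>Hypothesis (2) says that whenever four distinct elements of \<open>A\<close> satisfy
\<open>p + e = q + f > a\<^sub>n\<close>, the sum \<open>p + e\<close> lies in \<open>A\<close>. Let \<open>c\<close> be the common element of \<open>{x, x + d\<^sub>1}\<close> and \<open>{y, y + d\<^sub>2}\<close>, and say
\<open>d = d\<^sub>1 < e = d\<^sub>2\<close>. Comparing \<open>(c + d) + e\<close> with \<open>(c + e) + d\<close> puts \<open>b = c + d + e\<close> into \<open>A\<close>,
and then \<open>b + d\<close> as well. Since \<open>d, 2d \<in> A\<close>, \<open>(b + (i + 1)d) + d = (b + id) + 2d\<close> yields the
whole progression \<open>b + id\<close>, and \<open>(mb + id) + b = (mb + (i - 1)d) + (b + d)\<close> yields \<open>mb + id\<close>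
for all \<open>i > m \<ge> 1\<close>. In particular every positive multiple \<open>t(b + 2d)\<close> lies in \<open>A\<close>.\<close>

definition balanced_closed :: "int set \<Rightarrow> int \<Rightarrow> bool" where
  "balanced_closed A N \<longleftrightarrow>
     (\<forall>w1 w2 w3 w4. w1 \<in> A \<longrightarrow> w2 \<in> A \<longrightarrow> w3 \<in> A \<longrightarrow> w4 \<in> A \<longrightarrow>
        w1 < w2 \<longrightarrow> w2 < w3 \<longrightarrow> w3 < w4 \<longrightarrow> w1 + w4 = w2 + w3 \<longrightarrow> N < w1 + w4 \<longrightarrow> w1 + w4 \<in> A)"

lemma balanced_closed_image:
  fixes a :: "'i::linorder \<Rightarrow> int"
  assumes mono: "strict_mono_on I a"
    and closed: "\<And>i r s j v. i \<in> I \<Longrightarrow> r \<in> I \<Longrightarrow> s \<in> I \<Longrightarrow> j \<in> I \<Longrightarrow> i < r \<Longrightarrow> r < s \<Longrightarrow> s < j \<Longrightarrow>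
        v = a i + a j \<Longrightarrow> v = a r + a s \<Longrightarrow> N < v \<Longrightarrow> v \<in> a ` I"
  shows "balanced_closed (a ` I) N"
  unfolding balanced_closed_def
proof (intro allI impI)
  fix w1 w2 w3 w4
  assume "w1 \<in> a ` I" "w2 \<in> a ` I" "w3 \<in> a ` I" "w4 \<in> a ` I"
    and "w1 < w2" "w2 < w3" "w3 < w4" "w1 + w4 = w2 + w3" "N < w1 + w4"
  moreover obtain i r s j where "i \<in> I" "r \<in> I" "s \<in> I" "j \<in> I"
    and "w1 = a i" "w2 = a r" "w3 = a s" "w4 = a j"
    using calculation(1-4) by blast
  ultimately show "w1 + w4 \<in> a ` I"
    using closed strict_mono_on_less[OF mono] by metis
qed

lemma balanced_closedD:
  assumes "balanced_closed A N"
    and "p \<in> A" "q \<in> A" "e \<in> A" "f \<in> A" "p + e = q + f" "distinct [p, q, e, f]" "N < p + e"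
  shows "p + e \<in> A"
proof -
  have closed: "w1 + w4 \<in> A"
    if "w1 \<in> A" "w2 \<in> A" "w3 \<in> A" "w4 \<in> A" "w1 < w2" "w2 < w3" "w3 < w4" "w1 + w4 = w2 + w3"
      "N < w1 + w4" for w1 w2 w3 w4
    using assms(1) that unfolding balanced_closed_def by blast
  show ?thesis
  proof (cases "min p e < min q f")
    case True
    then show ?thesis
      using closed[of "min p e" "min q f" "max q f" "max p e"] assms(2-)
      by (auto simp: min_def max_def add.commute split: if_splits)
  next
    case False
    then show ?thesis
      using closed[of "min q f" "min p e" "max p e" "max q f"] assms(2-)
      by (auto simp: min_def max_def add.commute split: if_splits)
  qed
qed

lemma balanced_closed_progression:
  assumes closed: "balanced_closed A N"
    and "d \<in> A" "2 * d \<in> A" "u \<in> A" "u + d \<in> A"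
    and "0 < d" "2 * d < u" "N < u + 2 * d"
  shows "u + int i * d \<in> A"
proof -
  have "u + int i * d \<in> A \<and> u + int (i + 1) * d \<in> A"
  proof (induction i)
    case 0
    then show ?case using assms by simp
  next
    case (Suc i)
    define v where "v = u + int i * d"
    have "u \<le> v"
      using \<open>0 < d\<close> by (simp add: v_def)
    have "v \<in> A" "v + d \<in> A"
      using Suc by (simp_all add: v_def algebra_simps)
    then have "(v + d) + d \<in> A"
      using balanced_closedD[OF closed, of "v + d" v d "2 * d"] assms \<open>u \<le> v\<close> by auto
    then show ?case
      using Suc by (simp add: v_def algebra_simps)
  qed
  then show ?thesis ..
qed

lemma balanced_closed_multiples_progression:
  assumes closed: "balanced_closed A N"
    and progression: "\<And>i. b + int i * d \<in> A"
    and "0 < d" "2 * d < b" "N < b + 2 * d"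
    and "1 \<le> m" "m < i"
  shows "int m * b + int i * d \<in> A"
  using \<open>1 \<le> m\<close> \<open>m < i\<close>
proof (induction m arbitrary: i rule: nat_induct_at_least)
  case base
  then show ?case using progression by simp
next
  case (Suc m)
  then obtain i' where i': "i = Suc i'" "m < i'"
    by (metis Suc_lessE)
  define v where "v = int m * b + int i' * d"
  have "v \<in> A" "v + d \<in> A"
    using Suc.IH[of i'] Suc.IH[of i] i' by (simp_all add: v_def algebra_simps)
  moreover have "b \<in> A" "b + d \<in> A"
    using progression[of 0] progression[of 1] by simp_all
  moreover have "b + 2 * d \<le> v"
  proof -
    have "b \<le> int m * b" and "2 * d \<le> int i' * d"
      using Suc.hyps i' assms(3,4) by (simp_all add: mult_right_mono)
    then show ?thesis by (simp add: v_def)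
  qed
  ultimately have "(v + d) + b \<in> A"
    using balanced_closedD[OF closed, of "v + d" v b "b + d"] assms(3-5) by auto
  then show ?case
    using i' by (simp add: v_def algebra_simps)
qed

lemma balanced_closed_all_multiples:
  assumes closed: "balanced_closed A N"
    and "d \<in> A" "2 * d \<in> A" "b \<in> A" "b + d \<in> A"
    and "0 < d" "2 * d < b" "N < b + 2 * d"
  shows "\<exists>k \<ge> 1. \<forall>t > 0. t * k \<in> A"
proof (intro exI conjI allI impI)
  show "1 \<le> b + 2 * d" using assms by simp
  fix t :: int
  assume "0 < t"
  then obtain m where m: "t = int m" "1 \<le> m"
    using zero_less_imp_eq_int by fastforce
  have "int m * b + int (2 * m) * d \<in> A"
    by (rule balanced_closed_multiples_progression[OF closed balanced_closed_progression[OF assms]])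
      (use assms m in auto)
  then show "t * (b + 2 * d) \<in> A"
    using m by (simp add: algebra_simps)
qed

lemma balanced_closed_all_multiples_from_common_term:
  assumes closed: "balanced_closed A N"
    and "d \<in> A" "2 * d \<in> A" "e \<in> A" "2 * e \<in> A" "c \<in> A" "c + d \<in> A" "c + e \<in> A"
    and "d < c \<or> c + 2 * d \<in> A"
    and "0 < c" "0 < d" "d < e" "N < d + e"
  shows "\<exists>k \<ge> 1. \<forall>t > 0. t * k \<in> A"
proof -
  have b: "c + d + e \<in> A"
  proof (cases "c + d = e")
    case True
    then show ?thesis using \<open>2 * e \<in> A\<close> by simp
  next
    case False
    then show ?thesis
      using balanced_closedD[OF closed, of "c + d" "c + e" e d] assms by auto
  qed
  moreover have "c + d + e + d \<in> A"
  proof (cases "c + e = 2 * d")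
    case True
    then have "c + 2 * d \<in> A" using assms by auto
    then show ?thesis
      using True balanced_closedD[OF closed, of "c + d + e" "c + 2 * d" d e] b assms by auto
  next
    case False
    then show ?thesis
      using balanced_closedD[OF closed, of "c + d + e" "c + e" d "2 * d"] b assms by auto
  qed
  ultimately show ?thesis
    by (rule balanced_closed_all_multiples[OF closed \<open>d \<in> A\<close> \<open>2 * d \<in> A\<close>]) (use assms in auto)
qed

lemma in_three_term_progression:
  fixes c x d :: int
  assumes "c \<in> {x, x + d}" "x \<in> A" "x + d \<in> A" "x + 2 * d \<in> A" "0 < x"
  shows "c \<in> A \<and> c + d \<in> A \<and> (d < c \<or> c + 2 * d \<in> A)"
  using assms by (auto simp: algebra_simps)

theorem lemma2:
  fixes a :: "nat \<Rightarrow> int" and n :: nat and d1 d2 x y :: int and A :: "int set"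
  assumes pos: "\<forall>i\<ge>1. a i > 0"
    and incr: "\<forall>i j. 1 \<le> i \<longrightarrow> i < j \<longrightarrow> a i < a j"
    and A_def: "A = a ` {1..}"
    and n_pos: "n > 0"
    and cond1: "\<forall>m>n. \<exists>i r s j. 1 \<le> i \<and> i < r \<and> r \<le> s \<and> s < j \<and>
                   a m = a i + a j \<and> a m = a r + a s"
    and cond2: "\<forall>v i r s j. 1 \<le> i \<longrightarrow> i < r \<longrightarrow> r < s \<longrightarrow> s < j \<longrightarrow>
                   v = a i + a j \<longrightarrow> v = a r + a s \<longrightarrow> v > a n \<longrightarrow> (\<exists>m>n. v = a m)"
    and "x \<noteq> d1" and "d1 \<noteq> d2" and "d2 \<noteq> y"
    and sub: "{d1, 2*d1, x, x+d1, x+2*d1} \<union> {d2, 2*d2, y, y+d2, y+2*d2} \<subseteq> A"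
    and inter: "{x, x+d1} \<inter> {y, y+d2} \<noteq> {}"
    and big: "d1 + d2 > a n"
  shows "\<exists>k::int. k \<ge> 1 \<and> (\<forall>t::int. t > 0 \<longrightarrow> t * k \<in> A)"
proof -
  have closed: "balanced_closed A (a n)"
    unfolding A_def
  proof (rule balanced_closed_image)
    show "strict_mono_on {1..} a"
      using incr by (auto intro: strict_mono_onI)
    fix i r s j v
    assume "i \<in> {1..}" "i < r" "r < s" "s < j" "v = a i + a j" "v = a r + a s" "a n < v"
    then obtain m where "n < m" "v = a m"
      using cond2[rule_format, of i r s j v] by auto
    then show "v \<in> a ` {1..}"
      using n_pos by auto
  qed
  have positive: "0 < w" if "w \<in> A" for w
    using that pos A_def by auto
  obtain c where c: "c \<in> {x, x + d1}" "c \<in> {y, y + d2}"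
    using inter by blast
  have c1: "c \<in> A \<and> c + d1 \<in> A \<and> (d1 < c \<or> c + 2 * d1 \<in> A)"
    and c2: "c + d2 \<in> A \<and> (d2 < c \<or> c + 2 * d2 \<in> A)"
    using in_three_term_progression[OF c(1)] in_three_term_progression[OF c(2)] sub positive
    by auto
  have "0 < c" "0 < d1" "0 < d2"
    using c1 sub positive by auto
  show ?thesis
  proof (cases "d1 < d2")
    case True
    then show ?thesis
      using balanced_closed_all_multiples_from_common_term[OF closed, of d1 d2 c] c1 c2 sub
        \<open>0 < c\<close> \<open>0 < d1\<close> big by auto
  next
    case False
    then have "d2 < d1"
      using \<open>d1 \<noteq> d2\<close> by simp
    then show ?thesis
      using balanced_closed_all_multiples_from_common_term[OF closed, of d2 d1 c] c1 c2 sub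
        \<open>0 < c\<close> \<open>0 < d2\<close> big by auto
  qed
qed

end
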